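(* Let $h\ge1$ and $c$ be integers with $c>2(h+1)$. Let $G$ be the $h\times2^h$ binary reflected Gray code matrix: for $0\le m<2^h$, column $m$ of $G$ is the binary representation of $m\oplus\lfloor m/2\rfloor$ (bitwise XOR), with row $0$ the most significant bit and row $h-1$ the least significant bit. For $i\in\{0,\dots,c-1\}$ let $G^+(i)$ be the $c\times2^h$ binary matrix (rows indexed $0,\dots,c-1$) whose row $i$ is all ones, whose row $(i+k)\bmod c$ equals row $k-1$ of $G$ for $k=1,\dots,h$, and whose remaining rows are zero. Let $\mathbf{B}=[\,\mathbf{0}\;G^+(c-1)\;G^+(c-2)\;\cdots\;G^+(0)\,]$, a $c\times\ell$ matrix with $\ell=c2^h+1$, where $\mathbf{0}$ is the zero column. Then $\mathbf{B}$ satisfies: (1) the $2\ell$ vectors consisting of the columns of $\mathbf{B}$ and their binary complements are pairwise distinct; (2) the first column of $\mathbf{B}$ is zero; (3) every row of $\sigma(\mathbf{B})-\mathbf{B}$ has exactly $2^{h-1}+1$ entries equal to $-1$, where $\sigma(\mathbf{B})(\cdot,i)=\mathbf{B}(\cdot,(i+1)\bmod\ell)$.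
   Context: Columns of $\mathbf{B}$ are indexed $0,\dots,\ell-1$. The number of $-1$ entries in a row of $\sigma(\mathbf{B})-\mathbf{B}$ is the number of positions $t$ with $\mathbf{B}(r,t)=1$ and $\mathbf{B}(r,(t+1)\bmod\ell)=0$. *)

theory Defs
  imports Main
begin

(* Binary matrices are represented as functions  row => column => int  (entries 0/1),
   with rows indexed 0..c-1 and columns 0..l-1. *)

definition gray :: "nat \<Rightarrow> nat \<Rightarrow> nat \<Rightarrow> int" where
  "gray h k m = (if bit (xor m (m div 2)) (h - 1 - k) then 1 else 0)"

definition Gplus :: "nat \<Rightarrow> nat \<Rightarrow> nat \<Rightarrow> nat \<Rightarrow> nat \<Rightarrow> int" where
  "Gplus h c i r m =
     (if r = i then 1
      else if (\<exists>k\<in>{1..h}. r = (i + k) mod c)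
           then gray h ((THE k. k \<in> {1..h} \<and> r = (i + k) mod c) - 1) m
      else 0)"

(* B = [0  G^+(c-1)  G^+(c-2) ... G^+(0)], c x (c*2^h + 1). Column 1 + q*2^h + m
   (q < c, m < 2^h) is column m of G^+(c-1-q). *)
definition Bmat :: "nat \<Rightarrow> nat \<Rightarrow> nat \<Rightarrow> nat \<Rightarrow> int" where
  "Bmat h c r j =
     (if j = 0 then 0
      else Gplus h c (c - 1 - (j - 1) div 2 ^ h) r ((j - 1) mod 2 ^ h))"

definition ell :: "nat \<Rightarrow> nat \<Rightarrow> nat" where
  "ell h c = c * 2 ^ h + 1"

definition col :: "nat \<Rightarrow> (nat \<Rightarrow> nat \<Rightarrow> int) \<Rightarrow> nat \<Rightarrow> int list" where
  "col c B j = map (\<lambda>r. B r j) [0..<c]"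

definition ccol :: "nat \<Rightarrow> (nat \<Rightarrow> nat \<Rightarrow> int) \<Rightarrow> nat \<Rightarrow> int list" where
  "ccol c B j = map (\<lambda>r. 1 - B r j) [0..<c]"

definition sigma :: "nat \<Rightarrow> (nat \<Rightarrow> nat \<Rightarrow> int) \<Rightarrow> nat \<Rightarrow> nat \<Rightarrow> int" where
  "sigma l B r i = B r ((i + 1) mod l)"

end

theory Submission
  imports Defs
begin

text \<open>Column \<open>m\<close> of the block \<open>G\<^sup>+(i)\<close> is supported in the cyclic window of rows
\<open>i, i+1, \<dots>, i+h\<close> and has a 1 in row \<open>i\<close>. As \<open>2(h+1) < c\<close>, two windows never cover all
rows, so no column equals the complement of a column; a column determines its block because
each window would contain the other block's leading row, and inside a block the Gray code is
injective. A \<open>-1\<close> in row \<open>r\<close> of \<open>\<sigma>(B) - B\<close> is a 1 followed by a 0. Within a block these are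
the descents of the corresponding row of the stack \<open>[1; G; 0]\<close>, and a 1 at the end of a block
is always followed by a 0, because the first column of the next block is a unit vector outside
the current window. Summing over the \<open>h + 1\<close> blocks whose window contains \<open>r\<close> gives one
descent for the all-ones row, one for the top Gray row and \<open>2 ^ (k - 1)\<close> for Gray row \<open>k \<ge> 1\<close>,
that is \<open>2 ^ (h - 1) + 1\<close> in total.\<close>

definition cyc_offset :: "nat \<Rightarrow> nat \<Rightarrow> nat \<Rightarrow> nat" where
  "cyc_offset c i r = (r + c - i) mod c"

lemma cyc_offset_eq:
  "i < c \<Longrightarrow> r < c \<Longrightarrow> cyc_offset c i r = (if i \<le> r then r - i else r + c - i)"
  by (auto simp: cyc_offset_def le_mod_geq)

lemma cyc_offset_less: "0 < c \<Longrightarrow> cyc_offset c i r < c"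
  by (simp add: cyc_offset_def)

lemma add_cyc_offset_mod: "i < c \<Longrightarrow> r < c \<Longrightarrow> (i + cyc_offset c i r) mod c = r"
  by (auto simp: cyc_offset_eq le_mod_geq)

lemma cyc_offset_add_mod: "i < c \<Longrightarrow> k < c \<Longrightarrow> cyc_offset c i ((i + k) mod c) = k"
  by (cases "i + k < c") (auto simp: cyc_offset_eq le_mod_geq)

lemma cyc_offset_eq_0_iff: "i < c \<Longrightarrow> r < c \<Longrightarrow> cyc_offset c i r = 0 \<longleftrightarrow> r = i"
  by (auto simp: cyc_offset_eq)

lemma cyc_offset_involution: "i < c \<Longrightarrow> r < c \<Longrightarrow> cyc_offset c (cyc_offset c i r) r = i"
  by (auto simp: cyc_offset_eq)

lemma cyc_offset_add_swap:
  "i < c \<Longrightarrow> r < c \<Longrightarrow> i \<noteq> r \<Longrightarrow> cyc_offset c i r + cyc_offset c r i = c"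
  by (auto simp: cyc_offset_eq)

lemma cyc_offset_pred:
  "0 < i \<Longrightarrow> i < c \<Longrightarrow> r < c \<Longrightarrow> Suc (cyc_offset c i r) < c
    \<Longrightarrow> cyc_offset c (i - 1) r = Suc (cyc_offset c i r)"
  by (auto simp: cyc_offset_eq)

definition gray_code :: "nat \<Rightarrow> nat" where
  "gray_code m = xor m (m div 2)"

lemma bit_gray_code: "bit (gray_code m) p \<longleftrightarrow> bit m p \<noteq> bit m (Suc p)"
  by (simp add: gray_code_def bit_xor_iff bit_Suc)

lemma gray_eq_bit_gray_code: "gray h k m = (if bit (gray_code m) (h - 1 - k) then 1 else 0)"
  by (simp add: gray_def gray_code_def)

lemma inj_gray_code: "inj gray_code"
proof (rule injI)
  fix m m' :: nat
  show "gray_code m = gray_code m' \<Longrightarrow> m = m'"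
  proof (induction m arbitrary: m' rule: less_induct)
    case (less m)
    have xor_half: "x = xor (gray_code x) (x div 2)" for x :: nat
      by (simp add: gray_code_def xor.assoc)
    have half: "gray_code x div 2 = gray_code (x div 2)" for x
      using drop_bit_xor[of 1 x "x div 2"] by (simp add: gray_code_def drop_bit_eq_div)
    have "gray_code (m div 2) = gray_code (m' div 2)"
      using less.prems by (simp flip: half)
    then have "m = 0 \<or> m div 2 = m' div 2"
      using less.IH[of "m div 2"] by fastforce
    then consider "m = 0" | "m div 2 = m' div 2" by blast
    then show ?case
    proof cases
      case 1
      then have "m' = m' div 2"
        using less.prems xor_half[of m'] by (simp add: gray_code_def)
      then show ?thesis using 1 by presburger
    next
      case 2
      then show ?thesis using less.prems xor_half[of m] xor_half[of m'] by metis
    qed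
  qed
qed

lemma not_bit_ge_nat: "(m::nat) < 2 ^ h \<Longrightarrow> h \<le> n \<Longrightarrow> \<not> bit m n"
  by (metis bit_take_bit_iff not_le take_bit_nat_eq_self_iff)

lemma bit_top_nat:
  assumes "(m::nat) < 2 ^ Suc n" shows "bit m n \<longleftrightarrow> 2 ^ n \<le> m"
proof -
  have "m div 2 ^ n < 2" using assms by (simp add: less_mult_imp_div_less mult.commute)
  moreover have "0 < m div 2 ^ n \<longleftrightarrow> 2 ^ n \<le> m" by (simp add: div_greater_zero_iff)
  moreover have "odd q = (0 < q)" if "q < 2" for q :: nat using that by presburger
  ultimately show ?thesis by (simp add: bit_iff_odd)
qed

lemma gray_rows_eq_imp_eq:
  assumes "m < 2 ^ h" "m' < 2 ^ h" "\<forall>k<h. gray h k m = gray h k m'"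
  shows "m = m'"
proof -
  have "bit (gray_code m) n = bit (gray_code m') n" for n
  proof (cases "n < h")
    case True
    then show ?thesis
      using assms(3)[rule_format, of "h - 1 - n"]
      by (simp add: gray_eq_bit_gray_code split: if_splits)
  next
    case False
    then show ?thesis using assms(1,2) by (simp add: bit_gray_code not_bit_ge_nat)
  qed
  then have "gray_code m = gray_code m'" by (rule bit_eqI)
  then show ?thesis using inj_gray_code by (simp add: inj_eq)
qed

lemma gray_code_descent_iff:
  "bit (gray_code m) p \<and> \<not> bit (gray_code (Suc m)) p \<longleftrightarrow> m mod 2 ^ (p + 2) = 3 * 2 ^ p - 1"
proof (induction p arbitrary: m)
  case 0
  have "bit m 1 = odd (m div 2)" "bit (Suc m) 1 = odd (Suc m div 2)"
    by (simp_all add: bit_Suc bit_0)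
  then show ?case unfolding bit_gray_code by (simp add: bit_0) presburger
next
  case (Suc p)
  have bit_Suc_gray: "bit (gray_code x) (Suc p) = bit (gray_code (x div 2)) p" for x
    unfolding bit_gray_code by (simp add: bit_Suc)
  have mod_split: "m mod 2 ^ (Suc p + 2) = 2 * (m div 2 mod 2 ^ (p + 2)) + m mod 2"
    by (metis mod_mult2_eq power_Suc add_Suc)
  have rhs_split: "(3::nat) * 2 ^ Suc p - 1 = 2 * (3 * 2 ^ p - 1) + 1"
  proof -
    have "(1::nat) \<le> 2 ^ p" by simp
    then show ?thesis unfolding power_Suc by linarith
  qed
  have "2 * x + m mod 2 = 2 * y + 1 \<longleftrightarrow> odd m \<and> x = y" for x y :: nat
    by presburger
  then have residue_iff: "m mod 2 ^ (Suc p + 2) = 3 * 2 ^ Suc p - 1 \<longleftrightarrow>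
      odd m \<and> m div 2 mod 2 ^ (p + 2) = 3 * 2 ^ p - 1"
    unfolding mod_split rhs_split .
  show ?case
  proof (cases "odd m")
    case True
    then have "Suc m div 2 = Suc (m div 2)" by presburger
    then show ?thesis using Suc.IH[of "m div 2"] True residue_iff unfolding bit_Suc_gray by simp
  next
    case False
    then have "Suc m div 2 = m div 2" by presburger
    then show ?thesis using False residue_iff unfolding bit_Suc_gray by simp
  qed
qed

lemma card_residue_class:
  assumes "a < (d::nat)" shows "card {m. m < n * d \<and> m mod d = a} = n"
proof -
  have "{m. m < n * d \<and> m mod d = a} = (\<lambda>x. x * d + a) ` {..<n}"
  proof (intro set_eqI iffI)
    fix m assume "m \<in> {m. m < n * d \<and> m mod d = a}"
    then show "m \<in> (\<lambda>x. x * d + a) ` {..<n}"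
      by (auto intro!: image_eqI[of _ _ "m div d"] less_mult_imp_div_less)
  next
    fix m assume "m \<in> (\<lambda>x. x * d + a) ` {..<n}"
    then obtain x where "x < n" "m = x * d + a" by auto
    moreover have "x * d + a < Suc x * d" using assms by simp
    moreover have "Suc x * d \<le> n * d" using \<open>x < n\<close> by (intro mult_le_mono1) simp
    ultimately show "m \<in> {m. m < n * d \<and> m mod d = a}" using assms by simp
  qed
  moreover have "inj_on (\<lambda>x. x * d + a) {..<n}" using assms by (intro inj_onI) simp
  ultimately show ?thesis by (simp add: card_image)
qed

text \<open>The last position counts whenever \<open>f (n - 1) = 1\<close>, as if \<open>f\<close> were followed by a 0,
which is the situation at the end of every block of \<open>B\<close>.\<close>

definition descents :: "nat \<Rightarrow> (nat \<Rightarrow> int) \<Rightarrow> nat set" where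
  "descents n f = {m. m < n \<and> f m = 1 \<and> (Suc m < n \<longrightarrow> f (Suc m) = 0)}"

lemma card_descents_gray_row:
  assumes "1 \<le> k" "k < h"
  shows "card (descents (2 ^ h) (gray h k)) = 2 ^ (k - 1)"
proof -
  define p where "p = h - 1 - k"
  have hp: "h = (k - 1) + (p + 2)" using assms p_def by simp
  have pw: "(2::nat) ^ h = 2 ^ (k - 1) * 2 ^ (p + 2)" by (subst hp) (simp add: power_add)
  have gray_p: "gray h k x = (if bit (gray_code x) p then 1 else 0)" for x
    by (simp add: gray_eq_bit_gray_code p_def)
  have "(2::nat) ^ h - 1 = mask h" by (simp add: mask_eq_exp_minus_1)
  then have "bit ((2::nat) ^ h - 1) n" if "n < h" for n
    using that by (simp add: bit_mask_iff possible_bit_def)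
  then have last_not_descent: "\<not> bit (gray_code (2 ^ h - 1)) p"
    using hp by (simp add: bit_gray_code)
  have "m \<in> descents (2 ^ h) (gray h k) \<longleftrightarrow> m < 2 ^ h \<and> m mod 2 ^ (p + 2) = 3 * 2 ^ p - 1" for m
  proof
    assume m: "m \<in> descents (2 ^ h) (gray h k)"
    have "Suc m < 2 ^ h"
    proof (rule ccontr)
      assume "\<not> Suc m < 2 ^ h"
      moreover have "m < 2 ^ h" using m by (simp add: descents_def)
      ultimately have "m = 2 ^ h - 1" by linarith
      then show False using m last_not_descent by (simp add: descents_def gray_p)
    qed
    with m show "m < 2 ^ h \<and> m mod 2 ^ (p + 2) = 3 * 2 ^ p - 1"
      using gray_code_descent_iff[of m p] by (simp add: descents_def gray_p split: if_splits)
  next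
    assume "m < 2 ^ h \<and> m mod 2 ^ (p + 2) = 3 * 2 ^ p - 1"
    then show "m \<in> descents (2 ^ h) (gray h k)"
      using gray_code_descent_iff[of m p] by (simp add: descents_def gray_p)
  qed
  then have "descents (2 ^ h) (gray h k)
      = {m. m < 2 ^ (k - 1) * 2 ^ (p + 2) \<and> m mod 2 ^ (p + 2) = 3 * 2 ^ p - 1}"
    unfolding pw by blast
  moreover have "3 * 2 ^ p - 1 < (2::nat) ^ (p + 2)"
  proof -
    have "(1::nat) \<le> 2 ^ p" "(2::nat) ^ (p + 2) = 4 * 2 ^ p" by (simp_all add: power_add)
    then show ?thesis by linarith
  qed
  ultimately show ?thesis by (simp add: card_residue_class)
qed

lemma card_descents_gray_row_0:
  assumes "1 \<le> h" shows "card (descents (2 ^ h) (gray h 0)) = 1"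
proof -
  have h: "h = Suc (h - 1)" using assms by simp
  have top_row: "gray h 0 m = (if 2 ^ (h - 1) \<le> m then 1 else 0)" if "m < 2 ^ h" for m
    using that bit_top_nat[of m "h - 1"] not_bit_ge_nat[of m h h] h
    by (simp add: gray_eq_bit_gray_code bit_gray_code)
  have "(2::nat) ^ h = 2 * 2 ^ (h - 1)" "(1::nat) \<le> 2 ^ (h - 1)"
    by (subst h) simp_all
  then have "(2::nat) ^ (h - 1) \<le> 2 ^ h - 1" by linarith
  then have "descents (2 ^ h) (gray h 0) = {2 ^ h - 1}"
    by (auto simp: descents_def top_row)
  then show ?thesis by simp
qed

lemma sum_card_descents_gray_rows:
  assumes "1 \<le> h" shows "(\<Sum>k<h. card (descents (2 ^ h) (gray h k))) = 2 ^ (h - 1)"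
proof -
  have h: "Suc (h - 1) = h" using assms by simp
  let ?n = "\<lambda>k. card (descents (2 ^ h) (gray h k))"
  have "(\<Sum>k<h. ?n k) = ?n 0 + (\<Sum>k<h - 1. ?n (Suc k))"
    using sum.lessThan_Suc_shift[of ?n "h - 1"] unfolding h .
  also have "\<dots> = 1 + (\<Sum>k<h - 1. 2 ^ k)"
    using card_descents_gray_row_0[OF assms] by (simp add: card_descents_gray_row)
  also have "\<dots> = 2 ^ (h - 1)"
    by (simp add: mask_eq_sum_exp_nat[symmetric] lessThan_def)
  finally show ?thesis .
qed

text \<open>The stack \<open>[1; G; 0]\<close> of height \<open>c\<close>, that is \<open>G\<^sup>+(0)\<close>; every \<open>G\<^sup>+(i)\<close> is a cyclic row shift of it.\<close>

definition gray_stack :: "nat \<Rightarrow> nat \<Rightarrow> nat \<Rightarrow> int" where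
  "gray_stack h d m = (if d = 0 then 1 else if d \<le> h then gray h (d - 1) m else 0)"

lemma gray_stack_le_if_nonzero: "gray_stack h d m \<noteq> 0 \<Longrightarrow> d \<le> h"
  by (simp add: gray_stack_def split: if_splits)

lemma gray_stack_first_column: "gray_stack h d 0 = (if d = 0 then 1 else 0)"
  by (simp add: gray_stack_def gray_def)

lemma gray_stack_Suc: "k < h \<Longrightarrow> gray_stack h (Suc k) = gray h k"
  by (simp add: gray_stack_def fun_eq_iff)

lemma Gplus_eq_gray_stack:
  assumes "h < c" "i < c" "r < c"
  shows "Gplus h c i r m = gray_stack h (cyc_offset c i r) m"
proof -
  let ?d = "cyc_offset c i r"
  have offset_iff: "k \<in> {1..h} \<and> r = (i + k) mod c \<longleftrightarrow> k = ?d \<and> 1 \<le> ?d \<and> ?d \<le> h" for k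
  proof
    assume "k \<in> {1..h} \<and> r = (i + k) mod c"
    then show "k = ?d \<and> 1 \<le> ?d \<and> ?d \<le> h"
      using assms cyc_offset_add_mod[of i c k] by auto
  next
    assume "k = ?d \<and> 1 \<le> ?d \<and> ?d \<le> h"
    then show "k \<in> {1..h} \<and> r = (i + k) mod c"
      using assms add_cyc_offset_mod[of i c r] by auto
  qed
  then have "(\<exists>k\<in>{1..h}. r = (i + k) mod c) \<longleftrightarrow> 1 \<le> ?d \<and> ?d \<le> h"
    by blast
  moreover have "(THE k. k \<in> {1..h} \<and> r = (i + k) mod c) = ?d" if "1 \<le> ?d \<and> ?d \<le> h"
    using offset_iff that by (intro the_equality) blast+
  ultimately show ?thesis
    using cyc_offset_eq_0_iff[OF assms(2,3)] by (auto simp: Gplus_def gray_stack_def)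
qed

lemma Bmat_column_decomp:
  assumes "0 < j" "j < ell h c"
  obtains q m where "q < c" "m < 2 ^ h" "j = Suc (q * 2 ^ h + m)"
proof
  show "(j - 1) div 2 ^ h < c"
    using assms by (simp add: ell_def less_mult_imp_div_less)
  show "(j - 1) mod 2 ^ h < 2 ^ h" by simp
  show "j = Suc ((j - 1) div 2 ^ h * 2 ^ h + (j - 1) mod 2 ^ h)"
    using assms(1) div_mult_mod_eq[of "j - 1" "2 ^ h"] by linarith
qed

lemma Bmat_eq_gray_stack:
  assumes "h < c" "q < c" "m < 2 ^ h" "r < c"
  shows "Bmat h c r (Suc (q * 2 ^ h + m)) = gray_stack h (cyc_offset c (c - Suc q) r) m"
  using assms by (simp add: Bmat_def Gplus_eq_gray_stack)

lemma Bmat_zero_column: "Bmat h c r 0 = 0"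
  by (simp add: Bmat_def)

lemma Bmat_01: "Bmat h c r j \<in> {0, 1}"
  by (simp add: Bmat_def Gplus_def gray_def)

lemma gray_stack_columns_same_block:
  assumes "2 * h < c" "i < c" "i' < c"
    and "\<forall>r<c. gray_stack h (cyc_offset c i r) m = gray_stack h (cyc_offset c i' r) m'"
  shows "i = i'"
proof (rule ccontr)
  assume "i \<noteq> i'"
  have "gray_stack h (cyc_offset c i i') m = gray_stack h (cyc_offset c i' i') m'"
    using assms(3,4) by blast
  also have "\<dots> = 1" using cyc_offset_eq_0_iff[OF assms(3,3)] by (simp add: gray_stack_def)
  finally have "cyc_offset c i i' \<le> h" by (metis gray_stack_le_if_nonzero zero_neq_one)
  have "gray_stack h (cyc_offset c i' i) m' = gray_stack h (cyc_offset c i i) m"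
    using assms(2,4) by metis
  also have "\<dots> = 1" using cyc_offset_eq_0_iff[OF assms(2,2)] by (simp add: gray_stack_def)
  finally have "cyc_offset c i' i \<le> h" by (metis gray_stack_le_if_nonzero zero_neq_one)
  then show False
    using cyc_offset_add_swap[OF assms(2,3) \<open>i \<noteq> i'\<close>] assms(1) \<open>cyc_offset c i i' \<le> h\<close>
    by linarith
qed

lemma gray_stack_column_inj:
  assumes "h < c" "i < c" "m < 2 ^ h" "m' < 2 ^ h"
    and "\<forall>r<c. gray_stack h (cyc_offset c i r) m = gray_stack h (cyc_offset c i r) m'"
  shows "m = m'"
proof (rule gray_rows_eq_imp_eq[OF assms(3,4)], intro allI impI)
  fix k assume "k < h"
  then have "cyc_offset c i ((i + Suc k) mod c) = Suc k"
    using assms(1,2) cyc_offset_add_mod[of i c "Suc k"] by simp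
  then show "gray h k m = gray h k m'"
    using assms(5)[rule_format, of "(i + Suc k) mod c"] assms(2) \<open>k < h\<close>
    by (simp add: gray_stack_def)
qed

lemma Bmat_column_has_one:
  assumes "h < c" "0 < j" "j < ell h c"
  shows "\<exists>r<c. Bmat h c r j = 1"
proof -
  obtain q m where "q < c" "m < 2 ^ h" "j = Suc (q * 2 ^ h + m)"
    using Bmat_column_decomp[OF assms(2,3)] by blast
  then show ?thesis
    using assms(1) cyc_offset_eq_0_iff[of "c - Suc q" c]
    by (intro exI[of _ "c - Suc q"]) (simp add: Bmat_eq_gray_stack gray_stack_def)
qed

lemma Bmat_column_inj:
  assumes "2 * h < c" "j < ell h c" "j' < ell h c" "\<forall>r<c. Bmat h c r j = Bmat h c r j'"
  shows "j = j'"
proof -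
  have "h < c" using assms(1) by simp
  consider "j = 0" "j' = 0" | "0 < j" "j' = 0" | "j = 0" "0 < j'" | "0 < j" "0 < j'"
    by blast
  then show ?thesis
  proof cases
    case 1
    then show ?thesis by simp
  next
    case 2
    then obtain r where "r < c" "Bmat h c r j = 1"
      using Bmat_column_has_one[OF \<open>h < c\<close> _ assms(2)] by blast
    then show ?thesis using assms(4) 2 by (simp add: Bmat_def)
  next
    case 3
    then obtain r where "r < c" "Bmat h c r j' = 1"
      using Bmat_column_has_one[OF \<open>h < c\<close> _ assms(3)] by blast
    then show ?thesis using assms(4) 3 by (simp add: Bmat_def)
  next
    case 4
    obtain q m where qm: "q < c" "m < 2 ^ h" "j = Suc (q * 2 ^ h + m)"
      using Bmat_column_decomp[OF 4(1) assms(2)] .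
    obtain q' m' where qm': "q' < c" "m' < 2 ^ h" "j' = Suc (q' * 2 ^ h + m')"
      using Bmat_column_decomp[OF 4(2) assms(3)] .
    have cols: "\<forall>r<c. gray_stack h (cyc_offset c (c - Suc q) r) m
        = gray_stack h (cyc_offset c (c - Suc q') r) m'"
      using assms(1,4) qm qm' by (simp add: Bmat_eq_gray_stack)
    then have "c - Suc q = c - Suc q'"
      using assms(1) qm(1) qm'(1) by (intro gray_stack_columns_same_block) auto
    then have "q = q'" using qm(1) qm'(1) by simp
    moreover have "m = m'"
      using cols assms(1) qm qm' \<open>q = q'\<close> by (intro gray_stack_column_inj) auto
    ultimately show ?thesis using qm(3) qm'(3) by simp
  qed
qed

lemma card_cyc_window:
  assumes "i < c" shows "card {r. r < c \<and> cyc_offset c i r \<le> h} \<le> h + 1"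
proof -
  have "inj_on (cyc_offset c i) {r. r < c \<and> cyc_offset c i r \<le> h}"
    using assms add_cyc_offset_mod
    by (intro inj_on_inverseI[where g = "\<lambda>d. (i + d) mod c"]) auto
  then have "card {r. r < c \<and> cyc_offset c i r \<le> h} \<le> card {..h}"
    by (rule card_inj_on_le) auto
  then show ?thesis by simp
qed

lemma Bmat_common_zero_row:
  assumes "2 * (h + 1) < c" "j < ell h c" "j' < ell h c"
  shows "\<exists>r<c. Bmat h c r j = 0 \<and> Bmat h c r j' = 0"
proof -
  have support: "\<exists>i<c. \<forall>r<c. Bmat h c r x \<noteq> 0 \<longrightarrow> cyc_offset c i r \<le> h"
    if x: "x < ell h c" for x
  proof (cases "x = 0")
    case False
    then obtain q m where "q < c" "m < 2 ^ h" "x = Suc (q * 2 ^ h + m)"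
      using Bmat_column_decomp x by blast
    then show ?thesis
      using assms(1)
      by (intro exI[of _ "c - Suc q"]) (simp add: Bmat_eq_gray_stack gray_stack_le_if_nonzero)
  next
    case True
    then show ?thesis using assms(1) by (intro exI[of _ 0]) (simp add: Bmat_def)
  qed
  obtain i where "i < c" and i: "\<forall>r<c. Bmat h c r j \<noteq> 0 \<longrightarrow> cyc_offset c i r \<le> h"
    using support[OF assms(2)] by blast
  obtain i' where "i' < c" and i': "\<forall>r<c. Bmat h c r j' \<noteq> 0 \<longrightarrow> cyc_offset c i' r \<le> h"
    using support[OF assms(3)] by blast
  define W W' where "W = {r. r < c \<and> cyc_offset c i r \<le> h}"
    and "W' = {r. r < c \<and> cyc_offset c i' r \<le> h}"
  have "card W \<le> h + 1" unfolding W_def by (rule card_cyc_window) fact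
  moreover have "card W' \<le> h + 1" unfolding W'_def by (rule card_cyc_window) fact
  ultimately have "card (W \<union> W') \<le> 2 * (h + 1)"
    using card_Un_le[of W W'] by arith
  then have "\<not> {..<c} \<subseteq> W \<union> W'"
    using assms(1) card_mono[of "W \<union> W'" "{..<c}"] by (auto simp: W_def W'_def)
  then show ?thesis using i i' by (auto simp: W_def W'_def)
qed

lemma inj_on_columns_and_complements:
  fixes B :: "nat \<Rightarrow> nat \<Rightarrow> int"
  assumes "\<And>j j'. j \<in> J \<Longrightarrow> j' \<in> J \<Longrightarrow> \<forall>r<c. B r j = B r j' \<Longrightarrow> j = j'"
    and "\<And>j j'. j \<in> J \<Longrightarrow> j' \<in> J \<Longrightarrow> \<exists>r<c. B r j = 0 \<and> B r j' = 0"
  shows "inj_on (\<lambda>(j, b). if b then ccol c B j else col c B j) (J \<times> UNIV)"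
proof -
  have col_eq: "col c B j = col c B j' \<longleftrightarrow> (\<forall>r<c. B r j = B r j')"
    and ccol_eq: "ccol c B j = ccol c B j' \<longleftrightarrow> (\<forall>r<c. B r j = B r j')" for j j'
    by (auto simp: col_def ccol_def map_eq_conv)
  have ccol_ne_col: "ccol c B j \<noteq> col c B j'" if jj': "j \<in> J" "j' \<in> J" for j j'
  proof -
    obtain r where "r < c" "B r j = 0" "B r j' = 0" using assms(2)[OF jj'] by blast
    then have "ccol c B j ! r \<noteq> col c B j' ! r" by (simp add: col_def ccol_def)
    then show ?thesis by metis
  qed
  then have col_ne_ccol: "col c B j' \<noteq> ccol c B j" if "j \<in> J" "j' \<in> J" for j j'
    using that by metis
  show ?thesis
    by (rule inj_onI)
      (auto simp: col_eq ccol_eq ccol_ne_col col_ne_ccol intro: assms(1) split: if_splits)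
qed

lemma sigma_minus_eq_neg1_iff:
  assumes "\<And>r t. B r t \<in> {0, 1}"
  shows "sigma L B r t - B r t = -1 \<longleftrightarrow> B r t = 1 \<and> B r ((t + 1) mod L) = 0"
  using assms[of r t] assms[of r "(t + 1) mod L"] by (auto simp: sigma_def)

lemma Bmat_next_block_start:
  assumes "h + 1 < c" "r < c" "Suc q < c" "cyc_offset c (c - Suc q) r \<le> h"
  shows "Bmat h c r (Suc (Suc q * 2 ^ h)) = 0"
proof -
  have "cyc_offset c (c - Suc (Suc q)) r \<noteq> 0"
    using cyc_offset_pred[of "c - Suc q" c r] assms by (simp add: Suc_diff_Suc)
  then show ?thesis
    using assms(1-3) Bmat_eq_gray_stack[of h c "Suc q" 0 r] by (simp add: gray_stack_first_column)
qed

lemma Bmat_descent_iff: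
  assumes "h + 1 < c" "r < c" "q < c" "m < 2 ^ h"
  defines "t \<equiv> Suc (q * 2 ^ h + m)"
  shows "Bmat h c r t = 1 \<and> Bmat h c r ((t + 1) mod ell h c) = 0
     \<longleftrightarrow> m \<in> descents (2 ^ h) (gray_stack h (cyc_offset c (c - Suc q) r))"
proof -
  let ?f = "gray_stack h (cyc_offset c (c - Suc q) r)"
  have Bt: "Bmat h c r t = ?f m" using assms(1-4) by (simp add: t_def Bmat_eq_gray_stack)
  have block_end: "q * 2 ^ h + 2 ^ h \<le> c * 2 ^ h"
    using mult_le_mono1[of "Suc q" c "2 ^ h"] assms(3) by simp
  consider "Suc m < 2 ^ h" | "Suc m = 2 ^ h" "Suc q < c" | "Suc m = 2 ^ h" "Suc q = c"
    using assms(3,4) by linarith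
  then show ?thesis
  proof cases
    case 1
    then have "t + 1 = Suc (q * 2 ^ h + Suc m)" "t + 1 < ell h c"
      using block_end by (simp_all add: t_def ell_def)
    then have "Bmat h c r ((t + 1) mod ell h c) = ?f (Suc m)"
      using assms(1-3) 1 Bmat_eq_gray_stack[of h c q "Suc m" r] by simp
    then show ?thesis using Bt assms(4) 1 by (simp add: descents_def)
  next
    case 2
    have next_col: "t + 1 = Suc (Suc q * 2 ^ h)" using 2 by (simp add: t_def)
    moreover have "Suc q * 2 ^ h + 2 ^ h \<le> c * 2 ^ h"
      using mult_le_mono1[of "Suc (Suc q)" c "2 ^ h"] 2 by simp
    moreover have "0 < (2::nat) ^ h" by simp
    ultimately have "t + 1 < ell h c" unfolding ell_def by linarith
    have "Bmat h c r ((t + 1) mod ell h c) = 0" if "?f m = 1"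
    proof -
      have "cyc_offset c (c - Suc q) r \<le> h"
        using that by (metis gray_stack_le_if_nonzero zero_neq_one)
      then show ?thesis
        using Bmat_next_block_start[OF assms(1,2) 2(2)] next_col \<open>t + 1 < ell h c\<close> by simp
    qed
    then show ?thesis using Bt assms(4) 2 by (auto simp: descents_def)
  next
    case 3
    then have "t + 1 = ell h c"
      unfolding t_def ell_def by (metis add_Suc_right mult_Suc plus_1_eq_Suc add.commute)
    then have "(t + 1) mod ell h c = 0" by simp
    then show ?thesis using Bt assms(4) 3 by (simp add: descents_def Bmat_def)
  qed
qed

lemma inj_on_block_position: "inj_on (\<lambda>(q, m). Suc (q * n + m)) (UNIV \<times> {..<n})"
proof (rule inj_onI)
  fix x y :: "nat \<times> nat"
  assume xy: "x \<in> UNIV \<times> {..<n}" "y \<in> UNIV \<times> {..<n}"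
    and eq: "(\<lambda>(q, m). Suc (q * n + m)) x = (\<lambda>(q, m). Suc (q * n + m)) y"
  obtain q m q' m' where x: "x = (q, m)" and y: "y = (q', m')" by fastforce
  have "m < n" "m' < n" "q * n + m = q' * n + m'" using xy eq by (simp_all add: x y)
  moreover have "q = (q * n + m) div n" "m = (q * n + m) mod n" using \<open>m < n\<close> by simp_all
  moreover have "q' = (q' * n + m') div n" "m' = (q' * n + m') mod n" using \<open>m' < n\<close> by simp_all
  ultimately show "x = y" unfolding x y by metis
qed

lemma Bmat_row_descents:
  assumes "h + 1 < c" "r < c"
  shows "{t \<in> {0..<ell h c}. Bmat h c r t = 1 \<and> Bmat h c r ((t + 1) mod ell h c) = 0}
       = (\<lambda>(q, m). Suc (q * 2 ^ h + m))
           ` (SIGMA q:{..<c}. descents (2 ^ h) (gray_stack h (cyc_offset c (c - Suc q) r)))"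
    (is "?S = ?P ` ?Q")
proof (intro set_eqI iffI)
  fix t assume t: "t \<in> ?S"
  then have "t < ell h c" "Bmat h c r t = 1" by simp_all
  then have "0 < t" using Bmat_zero_column[of h c r] by (cases t) auto
  then obtain q m where qm: "q < c" "m < 2 ^ h" and t_eq: "t = Suc (q * 2 ^ h + m)"
    using Bmat_column_decomp \<open>t < ell h c\<close> by blast
  have "Bmat h c r t = 1 \<and> Bmat h c r ((t + 1) mod ell h c) = 0" using t by simp
  then have "m \<in> descents (2 ^ h) (gray_stack h (cyc_offset c (c - Suc q) r))"
    by (rule Bmat_descent_iff[OF assms qm, THEN iffD1, folded t_eq])
  then have "(q, m) \<in> ?Q" using qm(1) by simp
  moreover have "t = ?P (q, m)" using t_eq by simp
  ultimately show "t \<in> ?P ` ?Q" by (rule rev_image_eqI)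
next
  fix t assume "t \<in> ?P ` ?Q"
  then obtain p where p: "p \<in> ?Q" "t = ?P p" by (rule imageE)
  obtain q m where pqm: "p = (q, m)" by (cases p)
  have qm: "q < c" "m \<in> descents (2 ^ h) (gray_stack h (cyc_offset c (c - Suc q) r))"
    using p(1) by (simp_all add: pqm)
  have t: "t = Suc (q * 2 ^ h + m)" using p(2) by (simp add: pqm)
  have "m < 2 ^ h" using qm(2) by (simp add: descents_def)
  moreover have "q * 2 ^ h + 2 ^ h \<le> c * 2 ^ h"
    using mult_le_mono1[of "Suc q" c "2 ^ h"] qm(1) by simp
  ultimately have "t < ell h c" unfolding t ell_def by linarith
  moreover have "Bmat h c r t = 1 \<and> Bmat h c r ((t + 1) mod ell h c) = 0"
    using qm(2) by (rule Bmat_descent_iff[OF assms qm(1) \<open>m < 2 ^ h\<close>, THEN iffD2, folded t])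
  ultimately show "t \<in> ?S" by simp
qed

lemma card_Bmat_row_descents:
  assumes "h + 1 < c" "r < c"
  shows "card {t \<in> {0..<ell h c}. Bmat h c r t = 1 \<and> Bmat h c r ((t + 1) mod ell h c) = 0}
       = (\<Sum>i<c. card (descents (2 ^ h) (gray_stack h (cyc_offset c i r))))"
proof -
  let ?D = "\<lambda>i. descents (2 ^ h) (gray_stack h (cyc_offset c i r))"
  have "inj_on (\<lambda>(q, m). Suc (q * 2 ^ h + m)) (SIGMA q:{..<c}. ?D (c - Suc q))"
    by (rule inj_on_subset[OF inj_on_block_position]) (auto simp: descents_def)
  then have "card {t \<in> {0..<ell h c}. Bmat h c r t = 1 \<and> Bmat h c r ((t + 1) mod ell h c) = 0}
      = card (SIGMA q:{..<c}. ?D (c - Suc q))"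
    unfolding Bmat_row_descents[OF assms] by (rule card_image)
  also have "\<dots> = (\<Sum>q<c. card (?D (c - Suc q)))"
    by (rule card_SigmaI) (simp_all add: descents_def)
  also have "\<dots> = (\<Sum>i<c. card (?D i))"
    by (rule sum.nat_diff_reindex)
  finally show ?thesis .
qed

lemma sum_cyc_offset_reindex:
  assumes "r < c" shows "(\<Sum>i<c. f (cyc_offset c i r)) = (\<Sum>d<c. f d)"
proof -
  have "inj_on (\<lambda>i. cyc_offset c i r) {..<c}"
    using assms cyc_offset_involution
    by (intro inj_on_inverseI[where g = "\<lambda>d. cyc_offset c d r"]) auto
  moreover have "(\<lambda>i. cyc_offset c i r) ` {..<c} = {..<c}"
    using calculation assms by (intro endo_inj_surj) (auto simp: cyc_offset_less)
  ultimately show ?thesis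
    using sum.reindex[of "\<lambda>i. cyc_offset c i r" "{..<c}" f] by simp
qed

lemma sum_card_descents_gray_stack:
  assumes "1 \<le> h" "h < c"
  shows "(\<Sum>d<c. card (descents (2 ^ h) (gray_stack h d))) = 2 ^ (h - 1) + 1"
proof -
  let ?n = "\<lambda>d. card (descents (2 ^ h) (gray_stack h d))"
  have "(\<Sum>d<c. ?n d) = (\<Sum>d<Suc h. ?n d)"
    using assms(2) by (intro sum.mono_neutral_right) (auto simp: descents_def gray_stack_def)
  also have "\<dots> = ?n 0 + (\<Sum>k<h. card (descents (2 ^ h) (gray h k)))"
    by (subst sum.lessThan_Suc_shift) (simp add: gray_stack_Suc)
  also have "descents (2 ^ h) (gray_stack h 0) = {2 ^ h - 1}"
    by (auto simp: descents_def gray_stack_def)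
  finally show ?thesis using sum_card_descents_gray_rows[OF assms(1)] by simp
qed

theorem mainTheorem6:
  fixes h c :: nat
  assumes "h \<ge> 1" and "c > 2 * (h + 1)"
  shows "inj_on (\<lambda>(j, b). if b then ccol c (Bmat h c) j else col c (Bmat h c) j)
                ({0..<ell h c} \<times> (UNIV :: bool set))
       \<and> (\<forall>r<c. Bmat h c r 0 = 0)
       \<and> (\<forall>r<c. card {t \<in> {0..<ell h c}.
                 sigma (ell h c) (Bmat h c) r t - Bmat h c r t = -1} = 2 ^ (h - 1) + 1)"
proof (intro conjI allI impI)
  show "inj_on (\<lambda>(j, b). if b then ccol c (Bmat h c) j else col c (Bmat h c) j)
      ({0..<ell h c} \<times> (UNIV :: bool set))"
  proof (rule inj_on_columns_and_complements)
    fix j j' assume "j \<in> {0..<ell h c}" "j' \<in> {0..<ell h c}" "\<forall>r<c. Bmat h c r j = Bmat h c r j'"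
    then show "j = j'" using assms(2) by (intro Bmat_column_inj) auto
  next
    fix j j' assume "j \<in> {0..<ell h c}" "j' \<in> {0..<ell h c}"
    then show "\<exists>r<c. Bmat h c r j = 0 \<and> Bmat h c r j' = 0"
      using assms(2) by (intro Bmat_common_zero_row) auto
  qed
next
  fix r assume "r < c"
  show "Bmat h c r 0 = 0" by (rule Bmat_zero_column)
  have "h + 1 < c" using assms(2) by simp
  have "card {t \<in> {0..<ell h c}. sigma (ell h c) (Bmat h c) r t - Bmat h c r t = -1}
      = card {t \<in> {0..<ell h c}. Bmat h c r t = 1 \<and> Bmat h c r ((t + 1) mod ell h c) = 0}"
  proof -
    have "sigma (ell h c) (Bmat h c) r t - Bmat h c r t = -1
        \<longleftrightarrow> Bmat h c r t = 1 \<and> Bmat h c r ((t + 1) mod ell h c) = 0" for t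
      by (rule sigma_minus_eq_neg1_iff) (rule Bmat_01)
    then show ?thesis by (simp only:)
  qed
  also have "\<dots> = (\<Sum>i<c. card (descents (2 ^ h) (gray_stack h (cyc_offset c i r))))"
    by (rule card_Bmat_row_descents) fact+
  also have "\<dots> = (\<Sum>d<c. card (descents (2 ^ h) (gray_stack h d)))"
    by (rule sum_cyc_offset_reindex) fact
  also have "\<dots> = 2 ^ (h - 1) + 1"
    using assms by (intro sum_card_descents_gray_stack) auto
  finally show "card {t \<in> {0..<ell h c}. sigma (ell h c) (Bmat h c) r t - Bmat h c r t = -1}
      = 2 ^ (h - 1) + 1" .
qed

end
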